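(* For all $\alpha,\beta\in K\otimes\mathbb{C}$ and every integer $s\ge0$, $$(\alpha|\sigma^s(\beta_{\rm tw}))=\sum_{j=1}^3\sum_{p=1}^{a_j-1}\frac1{a_j}\eta_j^{ps}\chi_{j,p}(\alpha)\chi_{j,a_j-p}(\beta),\qquad \eta_j=e^{2\pi\mathbf{i}/a_j}.$$
   Context: Fix an integer $n\ge3$; $a_1=n-2$, $a_2=a_3=2$; $X=\mathbb{P}^1_{n-2,2,2}$ is the orbifold projective line with orbifold points of orders $n-2,2,2$. $K=\mathbb{Z}[L_1,L_2,L_3]/\langle L_i^{a_i}-L_j^{a_j},(L_i-1)(L_j-1):i\neq j\rangle$ is its $K$-ring, $L:=L_1^{n-2}$. $\mathrm{rk}$ is the ring map $L_i\mapsto1$; $\deg$ is additive with $\deg(1)=0$, $\deg(L_i)=1/a_i$, $\deg(EF)=\mathrm{rk}(E)\deg(F)+\mathrm{rk}(F)\deg(E)$; $\chi_{j,p}$ ($1\le j\le3$, $1\le p\le a_j-1$) is the ring map with $\chi_{j,p}(L_i)=e^{-2\pi\mathbf{i}p\delta_{j,i}/a_j}$; all extended linearly to $K\otimes\mathbb{C}$. The Euler pairing $\langle a,b\rangle=\chi(a^\vee\otimes b)$ equals $\frac1{2\pi}(\Psi(a),e^{\pi\mathbf{i}\theta}e^{\pi\mathbf{i}\rho}\Psi(b))$, where $H$ has basis $\phi_{0,0}=1,\phi_{0,1}=P,\phi_{i,p}$ (twisted sectors), pairing $(\phi_{0,0},\phi_{0,1})=1$, $(\phi_{i,p},\phi_{i,a_i-p})=1/a_i$,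 zero otherwise, $\theta(\phi_{0,0})=\frac12\phi_{0,0}$, $\theta(\phi_{0,1})=-\frac12\phi_{0,1}$, $\theta(\phi_{i,p})=(\frac12-\frac p{a_i})\phi_{i,p}$, $\rho\phi_{0,0}=\frac1{n-2}\phi_{0,1}$, $\rho$ zero on other basis vectors, and $\Psi(E)=\mathrm{rk}(E)(1-\frac{\gamma}{n-2}P)+2\pi\mathbf{i}\deg(E)P+\sum_{j,p}\Gamma(1-\frac p{a_j})\chi_{j,p}(E)\phi_{j,p}$, $\gamma=-\Gamma'(1)+(n-2)\log Q$. The intersection pairing is $(a|b)=\langle a,b\rangle+\langle b,a\rangle$. $\sigma:K\to K$ is multiplication by $T=L_1+L_2+L_3-L-1$. With $\kappa=2(n-2)$, $\beta_0=\frac1\kappa\sum_{s=0}^{\kappa-1}\sigma^s(\beta)$ and $\beta_{\rm tw}=\beta-\beta_0$. *)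

theory Defs
  imports "HOL-Analysis.Analysis" "HOL-Computational_Algebra.Polynomial"
begin

text \<open>Complex polynomials in the three variables L1 (outermost), L2, L3 (innermost).
  Elements of K \<otimes> C are represented by such polynomials (representatives modulo the
  defining ideal); all maps below are well defined on the quotient.\<close>
type_synonym kpoly = "complex poly poly poly"

definition ord_a :: "nat \<Rightarrow> nat \<Rightarrow> nat" where
  "ord_a n i = (if i = 1 then n - 2 else 2)"

definition Lvar :: "nat \<Rightarrow> kpoly" where
  "Lvar i = (if i = 1 then [:0, 1:] else if i = 2 then [:[:0, 1:]:] else [:[:[:0, 1:]:]:])"

definition cst :: "complex \<Rightarrow> kpoly" where
  "cst c = [:[:[:c:]:]:]"

definition ev3 :: "kpoly \<Rightarrow> complex \<Rightarrow> complex \<Rightarrow> complex \<Rightarrow> complex" where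
  "ev3 f x y z = poly (map_poly (\<lambda>q. poly (map_poly (\<lambda>r. poly r z) q) y) f) x"

definition pdL :: "nat \<Rightarrow> kpoly \<Rightarrow> kpoly" where
  "pdL i f = (if i = 1 then pderiv f else if i = 2 then map_poly pderiv f
              else map_poly (map_poly pderiv) f)"

definition rk :: "kpoly \<Rightarrow> complex" where
  "rk f = ev3 f 1 1 1"

definition dg :: "nat \<Rightarrow> kpoly \<Rightarrow> complex" where
  "dg n f = (\<Sum>i\<in>{1,2,3::nat}. (1 / of_nat (ord_a n i)) * ev3 (pdL i f) 1 1 1)"

definition chiv :: "nat \<Rightarrow> nat \<Rightarrow> nat \<Rightarrow> nat \<Rightarrow> complex" where
  "chiv n j p i = (if i = j then exp (- 2 * of_real pi * \<i> * of_nat p / of_nat (ord_a n j)) else 1)"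

definition chi :: "nat \<Rightarrow> nat \<Rightarrow> nat \<Rightarrow> kpoly \<Rightarrow> complex" where
  "chi n j p f = ev3 f (chiv n j p 1) (chiv n j p 2) (chiv n j p 3)"

definition gam :: "nat \<Rightarrow> real \<Rightarrow> complex" where
  "gam n Q = of_real (- deriv (Gamma :: real \<Rightarrow> real) 1 + real (n - 2) * ln Q)"

text \<open>Vectors of H: coordinates w.r.t. the basis phi_{0,0}, phi_{0,1}, phi_{j,p}
  (1 \<le> j \<le> 3, 1 \<le> p \<le> a_j - 1), indexed by pairs.\<close>
type_synonym hvec = "nat \<times> nat \<Rightarrow> complex"

definition Psi :: "nat \<Rightarrow> real \<Rightarrow> kpoly \<Rightarrow> hvec" where
  "Psi n Q E = (\<lambda>(j, p).
     if j = 0 \<and> p = 0 then rk E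
     else if j = 0 \<and> p = 1 then - rk E * gam n Q / of_nat (n - 2) + 2 * of_real pi * \<i> * dg n E
     else if j \<in> {1,2,3} \<and> 1 \<le> p \<and> p < ord_a n j then
       Gamma (of_real (1 - real p / real (ord_a n j))) * chi n j p E
     else 0)"

definition Hpair :: "nat \<Rightarrow> hvec \<Rightarrow> hvec \<Rightarrow> complex" where
  "Hpair n u v = u (0,0) * v (0,1) + u (0,1) * v (0,0)
     + (\<Sum>j\<in>{1,2,3::nat}. \<Sum>p\<in>{1..<ord_a n j}.
          (1 / of_nat (ord_a n j)) * u (j, p) * v (j, ord_a n j - p))"

definition theta_ev :: "nat \<Rightarrow> nat \<times> nat \<Rightarrow> real" where
  "theta_ev n x = (case x of (j, p) \<Rightarrow>
     if j = 0 then (if p = 0 then 1/2 else - 1/2) else 1/2 - real p / real (ord_a n j))"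

definition expTheta :: "nat \<Rightarrow> hvec \<Rightarrow> hvec" where
  "expTheta n v = (\<lambda>x. exp (of_real pi * \<i> * of_real (theta_ev n x)) * v x)"

definition rho :: "nat \<Rightarrow> hvec \<Rightarrow> hvec" where
  "rho n v = (\<lambda>x. if x = (0,1) then v (0,0) / of_nat (n - 2) else 0)"

text \<open>e^{pi i rho} = id + pi i rho, since rho^2 = 0.\<close>
definition expRho :: "nat \<Rightarrow> hvec \<Rightarrow> hvec" where
  "expRho n v = (\<lambda>x. v x + of_real pi * \<i> * rho n v x)"

definition euler :: "nat \<Rightarrow> real \<Rightarrow> kpoly \<Rightarrow> kpoly \<Rightarrow> complex" where
  "euler n Q a b = (1 / (2 * of_real pi)) * Hpair n (Psi n Q a) (expTheta n (expRho n (Psi n Q b)))"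

definition ipair :: "nat \<Rightarrow> real \<Rightarrow> kpoly \<Rightarrow> kpoly \<Rightarrow> complex" where
  "ipair n Q a b = euler n Q a b + euler n Q b a"

definition Tcls :: "nat \<Rightarrow> kpoly" where
  "Tcls n = Lvar 1 + Lvar 2 + Lvar 3 - Lvar 1 ^ (n - 2) - 1"

definition sigma :: "nat \<Rightarrow> kpoly \<Rightarrow> kpoly" where
  "sigma n f = Tcls n * f"

definition kappa :: "nat \<Rightarrow> nat" where
  "kappa n = 2 * (n - 2)"

definition beta0 :: "nat \<Rightarrow> kpoly \<Rightarrow> kpoly" where
  "beta0 n b = cst (1 / of_nat (kappa n)) * (\<Sum>s<kappa n. (sigma n ^^ s) b)"

definition beta_tw :: "nat \<Rightarrow> kpoly \<Rightarrow> kpoly" where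
  "beta_tw n b = b - beta0 n b"

definition eta :: "nat \<Rightarrow> nat \<Rightarrow> complex" where
  "eta n j = exp (2 * of_real pi * \<i> / of_nat (ord_a n j))"

end

theory Submission
  imports Defs
begin

(* The characters rk and chi_{j,p} are ring homomorphisms K (x) C -> C sending T to 1 and to the
   root of unity exp(-2 pi i p / a_j) respectively. Since a_j divides kappa, averaging over sigma^s,
   s < kappa, kills rk and leaves every chi_{j,p} unchanged; hence sigma^s(beta_tw) has rank 0 and
   chi_{j,a_j-p}(sigma^s(beta_tw)) = eta_j^(ps) chi_{j,a_j-p}(beta).
   On the pairing side, symmetrizing the Euler pairing cancels the terms involving gamma, and in each twisted sector the reflection formula Gamma(x) Gamma(1-x) = pi / sin(pi x)
   together with exp(pi i (x - 1/2)) + exp(pi i (1/2 - x)) = 2 sin(pi x), x = p/a_j, gives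
   (a|b) = rk(a) rk(b) / (n-2) + sum_{j,p} chi_{j,p}(a) chi_{j,a_j-p}(b) / a_j. *)

locale comm_ring_hom =
  fixes hom :: "'a::comm_ring_1 \<Rightarrow> 'b::comm_ring_1"
  assumes hom_add: "hom (x + y) = hom x + hom y"
    and hom_mult: "hom (x * y) = hom x * hom y"
    and hom_one: "hom 1 = 1"
begin

lemma hom_zero: "hom 0 = 0"
  using hom_add[of 0 0] by simp

lemma hom_diff: "hom (x - y) = hom x - hom y"
  using hom_add[of "x - y" y] by (simp add: algebra_simps)

lemma hom_power: "hom (x ^ k) = hom x ^ k"
  by (induction k) (simp_all add: hom_one hom_mult)

lemma hom_sum: "hom (\<Sum>i\<in>A. f i) = (\<Sum>i\<in>A. hom (f i))"
  by (induction A rule: infinite_finite_induct) (simp_all add: hom_zero hom_add)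

lemma map_poly_hom_add: "map_poly hom (p + q) = map_poly hom p + map_poly hom q"
  by (rule poly_eqI) (simp add: coeff_map_poly hom_zero hom_add)

lemma map_poly_hom_mult: "map_poly hom (p * q) = map_poly hom p * map_poly hom q"
proof (induction p rule: pCons_induct)
  case (pCons a p)
  have "map_poly hom (pCons a p * q) = smult (hom a) (map_poly hom q) + pCons 0 (map_poly hom (p * q))"
    by (simp add: map_poly_hom_add map_poly_smult hom_zero hom_mult map_poly_pCons)
  with pCons.IH show ?case
    by (simp add: map_poly_pCons hom_zero algebra_simps)
qed (simp add: hom_zero)

lemma comm_ring_hom_poly_map_poly: "comm_ring_hom (\<lambda>p. poly (map_poly hom p) x)"
  by unfold_locales (simp_all add: map_poly_hom_add map_poly_hom_mult hom_one hom_zero)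

end

lemma comm_ring_hom_poly: "comm_ring_hom (\<lambda>p. poly p x)"
  by unfold_locales simp_all

lemma comm_ring_hom_ev3: "comm_ring_hom (\<lambda>f. ev3 f x y z)"
  unfolding ev3_def
  by (intro comm_ring_hom.comm_ring_hom_poly_map_poly comm_ring_hom_poly)

interpretation ev3: comm_ring_hom "\<lambda>f. ev3 f x y z" for x y z
  by (rule comm_ring_hom_ev3)

lemma ev3_Lvar [simp]:
  "ev3 (Lvar 1) x y z = x" "ev3 (Lvar 2) x y z = y" "ev3 (Lvar 3) x y z = z"
  by (simp_all add: ev3_def Lvar_def map_poly_pCons)

lemma ev3_cst [simp]: "ev3 (cst c) x y z = c"
  by (simp add: ev3_def cst_def map_poly_pCons)

lemma ev3_Tcls: "ev3 (Tcls n) x y z = x + y + z - x ^ (n - 2) - 1"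
  by (simp only: Tcls_def ev3.hom_add ev3.hom_diff ev3.hom_power ev3.hom_one ev3_Lvar)

lemma ev3_sigma_power:
  "ev3 ((sigma n ^^ s) b) x y z = ev3 (Tcls n) x y z ^ s * ev3 b x y z"
  by (induction s) (simp_all add: sigma_def ev3.hom_mult)

lemma ev3_beta_tw:
  assumes "n \<ge> 3" and "ev3 (Tcls n) x y z ^ kappa n = 1"
  shows "ev3 (beta_tw n b) x y z = (if ev3 (Tcls n) x y z = 1 then 0 else ev3 b x y z)"
proof -
  define w where "w = ev3 (Tcls n) x y z"
  have "kappa n > 0"
    using assms(1) by (simp add: kappa_def)
  moreover have "w \<noteq> 1 \<Longrightarrow> (\<Sum>s<kappa n. w ^ s) = 0"
    using assms(2) by (simp add: w_def geometric_sum)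
  moreover have "ev3 (beta_tw n b) x y z = ev3 b x y z * (1 - (\<Sum>s<kappa n. w ^ s) / of_nat (kappa n))"
    by (simp add: beta_tw_def beta0_def ev3.hom_diff ev3.hom_mult ev3.hom_sum ev3_sigma_power
        w_def sum_distrib_left sum_divide_distrib mult.commute right_diff_distrib)
  ultimately show ?thesis
    by (simp add: w_def)
qed

lemma exp_neg_2pi_frac_power_eq_1:
  assumes "a > 0"
  shows "exp (- 2 * of_real pi * \<i> * of_nat q / of_nat a) ^ a = 1"
proof -
  have "of_nat a * (- 2 * of_real pi * \<i> * of_nat q / of_nat a) = \<i> * (of_int (- int q) * (of_real pi * 2))"
    using assms by (simp add: field_simps)
  then show ?thesis
    by (metis exp_of_nat_mult exp_2pi_1_int)
qed

lemma exp_neg_2pi_frac_neq_1: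
  assumes "1 \<le> q" and "q < a"
  shows "exp (- 2 * of_real pi * \<i> * of_nat q / of_nat a) \<noteq> 1"
proof
  define z :: complex where "z = - 2 * of_real pi * \<i> * of_nat q / of_nat a"
  assume "exp (- 2 * of_real pi * \<i> * of_nat q / of_nat a) = 1"
  then have "exp z = exp 0"
    by (simp add: z_def)
  moreover have "\<bar>Im z - Im 0\<bar> < 2 * pi"
    using assms by (simp add: z_def Im_divide_of_nat field_simps)
  ultimately have "z = 0"
    by (rule exp_complex_eqI[rotated])
  with assms show False
    by (simp add: z_def)
qed

lemma exp_neg_2pi_frac_complement:
  assumes "p < a"
  shows "exp (- 2 * of_real pi * \<i> * of_nat (a - p) / of_nat a) = exp (2 * of_real pi * \<i> / of_nat a) ^ p"
proof -
  have "- 2 * of_real pi * \<i> * of_nat (a - p) / of_nat a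
      = of_nat p * (2 * of_real pi * \<i> / of_nat a) + \<i> * (of_int (- 1) * (of_real pi * 2))"
    using assms by (simp add: of_nat_diff field_simps)
  then show ?thesis
    by (simp only: exp_plus_2pin exp_of_nat_mult)
qed

lemma ord_a_pos: "n \<ge> 3 \<Longrightarrow> ord_a n j > 0"
  by (simp add: ord_a_def)

lemma ord_a_dvd_kappa: "ord_a n j dvd kappa n"
  by (simp add: ord_a_def kappa_def)

lemma chiv_diag: "chiv n j q j = exp (- 2 * of_real pi * \<i> * of_nat q / of_nat (ord_a n j))"
  by (simp only: chiv_def refl if_True)

lemma chiv_complement: "p < ord_a n j \<Longrightarrow> chiv n j (ord_a n j - p) j = eta n j ^ p"
  unfolding chiv_diag eta_def by (rule exp_neg_2pi_frac_complement)

lemma chiv_power_ord_a: "n \<ge> 3 \<Longrightarrow> chiv n j q j ^ ord_a n j = 1"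
  unfolding chiv_diag by (rule exp_neg_2pi_frac_power_eq_1[OF ord_a_pos])

lemma chi_Tcls:
  assumes "n \<ge> 3" and "j \<in> {1, 2, 3}"
  shows "chi n j q (Tcls n) = chiv n j q j"
  using assms chiv_power_ord_a[OF assms(1), of j q]
  by (auto simp: chi_def ev3_Tcls chiv_def ord_a_def)

lemma rk_Tcls: "rk (Tcls n) = 1"
  by (simp add: rk_def ev3_Tcls)

lemma rk_sigma_power_beta_tw:
  assumes "n \<ge> 3"
  shows "rk ((sigma n ^^ s) (beta_tw n b)) = 0"
  using assms rk_Tcls by (simp add: rk_def ev3_sigma_power ev3_beta_tw)

lemma chi_sigma_power_beta_tw:
  assumes "n \<ge> 3" and "j \<in> {1, 2, 3}" and "1 \<le> q" "q < ord_a n j"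
  shows "chi n j q ((sigma n ^^ s) (beta_tw n b)) = chiv n j q j ^ s * chi n j q b"
proof -
  obtain k where "kappa n = ord_a n j * k"
    using ord_a_dvd_kappa by (rule dvdE)
  then have "chiv n j q j ^ kappa n = 1"
    by (simp add: power_mult chiv_power_ord_a[OF assms(1)])
  moreover have "chiv n j q j \<noteq> 1"
    unfolding chiv_diag using assms(3,4) by (rule exp_neg_2pi_frac_neq_1)
  ultimately show ?thesis
    using assms chi_Tcls by (simp add: chi_def ev3_sigma_power ev3_beta_tw)
qed

(* The Gamma factors of Psi in the sectors (j,p) and (j,a_j-p) times the theta-phase of the latter,
   for x = p/a_j. *)
definition gamma_phase :: "real \<Rightarrow> complex" where
  "gamma_phase x = Gamma (of_real (1 - x)) * Gamma (of_real x) * exp (of_real pi * \<i> * of_real (x - 1/2))"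

lemma exp_pi_i_of_real: "exp (of_real pi * \<i> * of_real t) = cis (pi * t)"
  by (simp add: cis_conv_exp mult_ac)

lemma exp_pi_i_phase_sum:
  "exp (of_real pi * \<i> * of_real (x - 1/2)) + exp (of_real pi * \<i> * of_real (1/2 - x))
     = 2 * of_real (sin (pi * x))"
proof -
  have "pi * (1/2 - x) = - (pi * (x - 1/2))" and "cos (pi * (x - 1/2)) = sin (pi * x)"
    by (simp_all add: algebra_simps cos_diff)
  then show ?thesis
    unfolding exp_pi_i_of_real by (simp add: complex_eq_iff)
qed

lemma gamma_phase_reflect:
  assumes "0 < x" and "x < 1"
  shows "gamma_phase x + gamma_phase (1 - x) = 2 * of_real pi"
proof -
  have "sin (complex_of_real pi * complex_of_real x) = complex_of_real (sin (pi * x))"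
    by (simp flip: sin_of_real)
  then have reflection: "Gamma (complex_of_real x) * Gamma (complex_of_real (1 - x)) = of_real pi / of_real (sin (pi * x))"
    using Gamma_reflection_complex[of "complex_of_real x"] by simp
  have "1 - (1 - x) = x" and "(1 - x) - 1/2 = 1/2 - x"
    by simp_all
  then have "gamma_phase x + gamma_phase (1 - x) = Gamma (complex_of_real x) * Gamma (complex_of_real (1 - x)) *
      (exp (of_real pi * \<i> * of_real (x - 1/2)) + exp (of_real pi * \<i> * of_real (1/2 - x)))"
    unfolding gamma_phase_def by (simp only: mult_ac distrib_left)
  also have "\<dots> = 2 * of_real pi"
    unfolding reflection exp_pi_i_phase_sum using sin_gt_zero[of "pi * x"] assms by simp
  finally show ?thesis .
qed

lemma gamma_phase_pair:
  assumes "1 \<le> p" and "p < m"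
  shows "gamma_phase (real p / real m) / of_nat m * u * v + gamma_phase (real (m - p) / real m) / of_nat m * v * u
    = 2 * of_real pi * (1 / of_nat m * u * v)"
proof -
  define x where "x = real p / real m"
  have "0 < x" "x < 1" and complement: "real (m - p) / real m = 1 - x"
    using assms by (auto simp: x_def of_nat_diff field_simps)
  have "gamma_phase x / of_nat m * u * v + gamma_phase (1 - x) / of_nat m * v * u
      = (gamma_phase x + gamma_phase (1 - x)) / of_nat m * u * v"
    by (simp add: algebra_simps add_divide_distrib)
  with \<open>0 < x\<close> \<open>x < 1\<close> show ?thesis
    unfolding x_def[symmetric] complement by (simp add: gamma_phase_reflect)
qed

lemma Psi_twisted:
  assumes "j \<in> {1, 2, 3}" and "1 \<le> p" "p < ord_a n j"
  shows "Psi n Q E (j, p) = Gamma (of_real (1 - real p / real (ord_a n j))) * chi n j p E"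
  using assms by (auto simp: Psi_def)

lemma expTheta_expRho_twisted:
  assumes "j \<noteq> 0"
  shows "expTheta n (expRho n v) (j, p) = exp (of_real pi * \<i> * of_real (1/2 - real p / real (ord_a n j))) * v (j, p)"
  using assms by (simp add: expTheta_def expRho_def rho_def theta_ev_def)

lemma euler_twisted_term:
  assumes "j \<in> {1, 2, 3}" and "1 \<le> p" "p < ord_a n j"
  shows "1 / of_nat (ord_a n j) * Psi n Q a (j, p) * expTheta n (expRho n (Psi n Q b)) (j, ord_a n j - p)
    = gamma_phase (real p / real (ord_a n j)) / of_nat (ord_a n j) * chi n j p a * chi n j (ord_a n j - p) b"
proof -
  define m where "m = ord_a n j"
  have "real (m - p) = real m - real p" and "m > 0"
    using assms by (simp_all add: m_def)
  then have complement: "1 - real (m - p) / real m = real p / real m"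
      "1/2 - real (m - p) / real m = real p / real m - 1/2"
    by (simp_all add: field_simps)
  have "expTheta n (expRho n (Psi n Q b)) (j, m - p)
      = exp (of_real pi * \<i> * of_real (1/2 - real (m - p) / real m)) * Psi n Q b (j, m - p)"
    unfolding m_def using assms(1) by (intro expTheta_expRho_twisted) auto
  also have "Psi n Q b (j, m - p) = Gamma (of_real (1 - real (m - p) / real m)) * chi n j (m - p) b"
    unfolding m_def using assms by (intro Psi_twisted) auto
  finally have "expTheta n (expRho n (Psi n Q b)) (j, m - p)
      = exp (of_real pi * \<i> * of_real (real p / real m - 1/2)) * (Gamma (of_real (real p / real m)) * chi n j (m - p) b)"
    unfolding complement .
  moreover have "Psi n Q a (j, p) = Gamma (of_real (1 - real p / real m)) * chi n j p a"
    unfolding m_def using assms by (rule Psi_twisted)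
  ultimately show ?thesis
    unfolding m_def[symmetric] gamma_phase_def by (simp add: mult_ac)
qed

lemma euler_eq:
  "euler n Q a b =
    (\<i> * (Psi n Q a (0, 1) * rk b - rk a * Psi n Q b (0, 1)) + of_real pi * rk a * rk b / of_nat (n - 2)
     + (\<Sum>j\<in>{1,2,3::nat}. \<Sum>p\<in>{1..<ord_a n j}.
          gamma_phase (real p / real (ord_a n j)) / of_nat (ord_a n j) * chi n j p a * chi n j (ord_a n j - p) b))
    / (2 * of_real pi)"
proof -
  have "exp (of_real pi * \<i> * of_real (1 / 2)) = \<i>" and "exp (of_real pi * \<i> * of_real (- 1 / 2)) = - \<i>"
    unfolding exp_pi_i_of_real by simp_all
  then have untwisted: "Psi n Q a (0, 0) * expTheta n (expRho n (Psi n Q b)) (0, 1)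
      + Psi n Q a (0, 1) * expTheta n (expRho n (Psi n Q b)) (0, 0)
    = \<i> * (Psi n Q a (0, 1) * rk b - rk a * Psi n Q b (0, 1)) + of_real pi * rk a * rk b / of_nat (n - 2)"
    by (simp add: expTheta_def expRho_def rho_def theta_ev_def Psi_def algebra_simps)
  have twisted: "(\<Sum>j\<in>{1,2,3::nat}. \<Sum>p\<in>{1..<ord_a n j}.
      1 / of_nat (ord_a n j) * Psi n Q a (j, p) * expTheta n (expRho n (Psi n Q b)) (j, ord_a n j - p))
    = (\<Sum>j\<in>{1,2,3::nat}. \<Sum>p\<in>{1..<ord_a n j}.
      gamma_phase (real p / real (ord_a n j)) / of_nat (ord_a n j) * chi n j p a * chi n j (ord_a n j - p) b)"
    by (intro sum.cong refl euler_twisted_term) auto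
  show ?thesis
    unfolding euler_def Hpair_def untwisted twisted by simp
qed

lemma ipair_eq:
  "ipair n Q a b = rk a * rk b / of_nat (n - 2)
    + (\<Sum>j\<in>{1,2,3::nat}. \<Sum>p\<in>{1..<ord_a n j}.
         1 / of_nat (ord_a n j) * chi n j p a * chi n j (ord_a n j - p) b)"
proof -
  define T where "T a b j p =
    gamma_phase (real p / real (ord_a n j)) / of_nat (ord_a n j) * chi n j p a * chi n j (ord_a n j - p) b"
    for a b j p
  have reverse: "(\<Sum>p\<in>{1..<ord_a n j}. T b a j p) = (\<Sum>p\<in>{1..<ord_a n j}. T b a j (ord_a n j - p))" for j
    by (subst sum.atLeastLessThan_rev) simp
  have reflect: "T a b j p + T b a j (ord_a n j - p)
      = 2 * of_real pi * (1 / of_nat (ord_a n j) * chi n j p a * chi n j (ord_a n j - p) b)"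
    if "p \<in> {1..<ord_a n j}" for j p
    using that gamma_phase_pair[of p "ord_a n j"] by (simp add: T_def)
  have regroup: "(x1 + y1 + s1) / c + (x2 + y2 + s2) / c = ((x1 + x2) + (y1 + y2) + (s1 + s2)) / c"
    for x1 y1 s1 x2 y2 s2 c :: complex
    by (simp add: add_divide_distrib)
  have "\<i> * (Psi n Q a (0, 1) * rk b - rk a * Psi n Q b (0, 1)) + \<i> * (Psi n Q b (0, 1) * rk a - rk b * Psi n Q a (0, 1)) = 0"
    by (simp add: algebra_simps)
  moreover have "of_real pi * rk a * rk b / of_nat (n - 2) + of_real pi * rk b * rk a / of_nat (n - 2)
      = 2 * of_real pi * (rk a * rk b / of_nat (n - 2))"
    by (simp add: algebra_simps add_divide_distrib)
  moreover have "(\<Sum>j\<in>{1,2,3::nat}. \<Sum>p\<in>{1..<ord_a n j}. T a b j p) + (\<Sum>j\<in>{1,2,3::nat}. \<Sum>p\<in>{1..<ord_a n j}. T b a j p)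
      = (\<Sum>j\<in>{1,2,3::nat}. \<Sum>p\<in>{1..<ord_a n j}. T a b j p + T b a j (ord_a n j - p))"
    by (simp only: sum.distrib reverse)
  ultimately have "ipair n Q a b = (0 + 2 * of_real pi * (rk a * rk b / of_nat (n - 2))
      + (\<Sum>j\<in>{1,2,3::nat}. \<Sum>p\<in>{1..<ord_a n j}. T a b j p + T b a j (ord_a n j - p))) / (2 * of_real pi)"
    unfolding ipair_def euler_eq T_def[symmetric] regroup by (simp only:)
  also have "\<dots> = (2 * of_real pi * (rk a * rk b / of_nat (n - 2)
      + (\<Sum>j\<in>{1,2,3::nat}. \<Sum>p\<in>{1..<ord_a n j}. 1 / of_nat (ord_a n j) * chi n j p a * chi n j (ord_a n j - p) b)))
      / (2 * of_real pi)"
    by (simp only: reflect sum_distrib_left distrib_left add_0 cong: sum.cong)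
  also have "\<dots> = rk a * rk b / of_nat (n - 2)
    + (\<Sum>j\<in>{1,2,3::nat}. \<Sum>p\<in>{1..<ord_a n j}. 1 / of_nat (ord_a n j) * chi n j p a * chi n j (ord_a n j - p) b)"
    by simp
  finally show ?thesis .
qed

theorem lemma8:
  fixes n s :: nat and Q :: real and \<alpha> \<beta> :: kpoly
  assumes "n \<ge> 3" and "Q > 0"
  shows "ipair n Q \<alpha> ((sigma n ^^ s) (beta_tw n \<beta>)) =
    (\<Sum>j\<in>{1,2,3::nat}. \<Sum>p\<in>{1..<ord_a n j}.
       (1 / of_nat (ord_a n j)) * eta n j ^ (p * s) * chi n j p \<alpha> * chi n j (ord_a n j - p) \<beta>)"
proof -
  have "chi n j (ord_a n j - p) ((sigma n ^^ s) (beta_tw n \<beta>)) = eta n j ^ (p * s) * chi n j (ord_a n j - p) \<beta>"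
    if "j \<in> {1, 2, 3}" and "p \<in> {1..<ord_a n j}" for j p
  proof -
    have "1 \<le> ord_a n j - p" and "ord_a n j - p < ord_a n j"
      using that(2) by auto
    with that show ?thesis
      by (simp add: chi_sigma_power_beta_tw[OF assms(1)] chiv_complement power_mult)
  qed
  then show ?thesis
    unfolding ipair_eq rk_sigma_power_beta_tw[OF assms(1)] by (auto intro!: sum.cong simp: mult_ac)
qed

end
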